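(* Let $G_i=(V_i,E_i)$ be a graph and $S_i\subseteq V_i$, $i\in\{1,2\}$, and let $k,k'$ be integers. If $S_1\times S_2$ is a $k$-daf set in $G_1\times G_2$ and $S_2$ is a defensive $k'$-alliance in $G_2$, then $S_1$ is a $(k-k')$-daf set in $G_1$.
   Context: All graphs are finite and simple. For a graph $G=(V,E)$, a set $S\subseteq V$ and $v\in V$, let $\delta_S(v)=|\{u\in S: uv\in E\}|$ and $\overline{S}=V\setminus S$. For an integer $k$, a non-empty set $S\subseteq V$ is a defensive $k$-alliance if $\delta_S(v)\ge \delta_{\overline S}(v)+k$ for every $v\in S$. A set $X\subseteq V$ is a defensive $k$-alliance free set ($k$-daf set) if no defensive $k$-alliance $S$ satisfies $S\subseteq X$. The Cartesian product $G_1\times G_2$ of $G_1=(V_1,E_1)$, $G_2=(V_2,E_2)$ has vertex set $V_1\times V_2$, with $(a,b)$ adjacent to $(c,d)$ iff either $a=c$ and $bd\in E_2$, or $b=d$ and $ac\in E_1$. *)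

theory Defs
  imports Main
begin

definition graph :: "'a set \<Rightarrow> ('a \<Rightarrow> 'a \<Rightarrow> bool) \<Rightarrow> bool" where
  "graph V E \<longleftrightarrow> finite V \<and> (\<forall>u v. E u v \<longrightarrow> u \<in> V \<and> v \<in> V)
     \<and> (\<forall>u v. E u v \<longrightarrow> E v u) \<and> (\<forall>v. \<not> E v v)"

definition delta :: "('a \<Rightarrow> 'a \<Rightarrow> bool) \<Rightarrow> 'a set \<Rightarrow> 'a \<Rightarrow> int" where
  "delta E S v = int (card {u \<in> S. E u v})"

definition defensive_alliance :: "'a set \<Rightarrow> ('a \<Rightarrow> 'a \<Rightarrow> bool) \<Rightarrow> int \<Rightarrow> 'a set \<Rightarrow> bool" where
  "defensive_alliance V E k S \<longleftrightarrow> S \<noteq> {} \<and> S \<subseteq> V \<and>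
     (\<forall>v\<in>S. delta E S v \<ge> delta E (V - S) v + k)"

definition daf_set :: "'a set \<Rightarrow> ('a \<Rightarrow> 'a \<Rightarrow> bool) \<Rightarrow> int \<Rightarrow> 'a set \<Rightarrow> bool" where
  "daf_set V E k X \<longleftrightarrow> X \<subseteq> V \<and> \<not> (\<exists>S. S \<subseteq> X \<and> defensive_alliance V E k S)"

definition cart_edge :: "('a \<Rightarrow> 'a \<Rightarrow> bool) \<Rightarrow> ('b \<Rightarrow> 'b \<Rightarrow> bool) \<Rightarrow> 'a \<times> 'b \<Rightarrow> 'a \<times> 'b \<Rightarrow> bool" where
  "cart_edge E1 E2 p q \<longleftrightarrow>
     (fst p = fst q \<and> E2 (snd p) (snd q)) \<or> (snd p = snd q \<and> E1 (fst p) (fst q))"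

end

theory Submission
  imports Defs
begin

(* Defensive alliances multiply under the Cartesian product:
   if S is a defensive k1-alliance of G1 and T a defensive k2-alliance of
   G2, then S x T is a defensive (k1+k2)-alliance of G1 x G2.  This rests on
   the observation that the neighbours of (a,b) inside a set C of product
   vertices split into those in the column through a (moving along G2) and
   those in the row through b (moving along G1); applying it to C = S x T
   and to its complement adds the two alliance inequalities.
   The theorem follows by contraposition: a defensive (k-k')-alliance
   S contained in S1 would yield the defensive k-alliance S x S2 contained
   in S1 x S2, contradicting that S1 x S2 is k-alliance free. *)

text \<open>Irreflexivity of one factor makes the two parts
  disjoint.\<close>
lemma delta_cart_edge:
  assumes "finite C" and "\<not> E1 a a"
  shows "delta (cart_edge E1 E2) C (a, b) =
         delta E2 {y. (a, y) \<in> C} b + delta E1 {x. (x, b) \<in> C} a"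
proof -
  let ?col = "{y \<in> {y. (a, y) \<in> C}. E2 y b}"
  let ?row = "{x \<in> {x. (x, b) \<in> C}. E1 x a}"
  have split: "{q \<in> C. cart_edge E1 E2 q (a, b)} = Pair a ` ?col \<union> (\<lambda>x. (x, b)) ` ?row"
    by (auto simp: cart_edge_def)
  have "finite ?col"
    using finite_imageI[OF \<open>finite C\<close>, of snd] by (rule finite_subset[rotated]) force
  moreover have "finite ?row"
    using finite_imageI[OF \<open>finite C\<close>, of fst] by (rule finite_subset[rotated]) force
  moreover have "Pair a ` ?col \<inter> (\<lambda>x. (x, b)) ` ?row = {}"
    using \<open>\<not> E1 a a\<close> by auto
  ultimately have "card {q \<in> C. cart_edge E1 E2 q (a, b)} =
                   card (Pair a ` ?col) + card ((\<lambda>x. (x, b)) ` ?row)"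
    unfolding split by (intro card_Un_disjoint) auto
  also have "\<dots> = card ?col + card ?row"
    by (simp add: card_image inj_on_def)
  finally show ?thesis by (simp add: delta_def)
qed

lemma defensive_alliance_cart_product:
  assumes G1: "graph V1 E1" and G2: "graph V2 E2"
    and S: "defensive_alliance V1 E1 k1 S"
    and T: "defensive_alliance V2 E2 k2 T"
  shows "defensive_alliance (V1 \<times> V2) (cart_edge E1 E2) (k1 + k2) (S \<times> T)"
  unfolding defensive_alliance_def
proof (intro conjI ballI)
  have "S \<noteq> {}" "S \<subseteq> V1" "T \<noteq> {}" "T \<subseteq> V2"
    using S T by (auto simp: defensive_alliance_def)
  then show "S \<times> T \<noteq> {}" and "S \<times> T \<subseteq> V1 \<times> V2" by auto
  fix p assume "p \<in> S \<times> T"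
  then obtain a b where p: "p = (a, b)" and "a \<in> S" "b \<in> T" by auto
  have fin: "finite (V1 \<times> V2)" and irr: "\<not> E1 a a"
    using G1 G2 by (auto simp: graph_def)
  have "delta E1 S a \<ge> delta E1 (V1 - S) a + k1"
    using S \<open>a \<in> S\<close> by (auto simp: defensive_alliance_def)
  moreover have "delta E2 T b \<ge> delta E2 (V2 - T) b + k2"
    using T \<open>b \<in> T\<close> by (auto simp: defensive_alliance_def)
  moreover have "delta (cart_edge E1 E2) (S \<times> T) (a, b) = delta E2 T b + delta E1 S a"
    using delta_cart_edge[of "S \<times> T" E1 a E2 b] finite_subset[OF \<open>S \<times> T \<subseteq> V1 \<times> V2\<close> fin] irr
      \<open>a \<in> S\<close> \<open>b \<in> T\<close> by simp
  moreover have "{y. (a, y) \<in> V1 \<times> V2 - S \<times> T} = V2 - T"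
    and "{x. (x, b) \<in> V1 \<times> V2 - S \<times> T} = V1 - S"
    using \<open>a \<in> S\<close> \<open>b \<in> T\<close> \<open>S \<subseteq> V1\<close> \<open>T \<subseteq> V2\<close> by auto
  then have "delta (cart_edge E1 E2) (V1 \<times> V2 - S \<times> T) (a, b) =
             delta E2 (V2 - T) b + delta E1 (V1 - S) a"
    using delta_cart_edge[of "V1 \<times> V2 - S \<times> T" E1 a E2 b] fin irr
    by simp
  ultimately show "delta (cart_edge E1 E2) (S \<times> T) p \<ge>
                   delta (cart_edge E1 E2) (V1 \<times> V2 - S \<times> T) p + (k1 + k2)"
    unfolding p by linarith
qed

theorem theorem2:
  fixes V1 :: "'a set" and E1 :: "'a \<Rightarrow> 'a \<Rightarrow> bool"
    and V2 :: "'b set" and E2 :: "'b \<Rightarrow> 'b \<Rightarrow> bool"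
    and S1 :: "'a set" and S2 :: "'b set" and k k' :: int
  assumes "graph V1 E1" and "graph V2 E2"
    and "S1 \<subseteq> V1" and "S2 \<subseteq> V2"
    and "daf_set (V1 \<times> V2) (cart_edge E1 E2) k (S1 \<times> S2)"
    and "defensive_alliance V2 E2 k' S2"
  shows "daf_set V1 E1 (k - k') S1"
proof (rule ccontr)
  assume "\<not> ?thesis"
  then obtain S where "S \<subseteq> S1" and "defensive_alliance V1 E1 (k - k') S"
    using \<open>S1 \<subseteq> V1\<close> by (auto simp: daf_set_def)
  then have "defensive_alliance (V1 \<times> V2) (cart_edge E1 E2) k (S \<times> S2)"
    using defensive_alliance_cart_product[OF assms(1,2) _ assms(6)] by fastforce
  moreover have "S \<times> S2 \<subseteq> S1 \<times> S2" using \<open>S \<subseteq> S1\<close> by auto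
  ultimately show False using assms(5) unfolding daf_set_def by blast
qed

end
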